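(* For $(w,x,y,z)$ define $$\tilde{\mathcal{J}}_1=\frac{(w^2+z^2)xy+\beta(wx+wz+yz)}{wxyz},$$ $$\tilde{\mathcal{J}}_2=\frac{w^2z^2+xz(w^2+x^2+y^2+xz)+wy(x^2+y^2+z^2+wy)+\beta(x^2+y^2+xz+wy)}{wxyz},$$ $$\tilde{\mathcal{J}}_3=\frac{(w+y)(x+z)(xz+yw+\beta)}{wxyz}.$$ Then for every $\beta\in\mathbb{Z}\setminus\{0,-1\}$ and every $(\lambda_1:\lambda_2:\lambda_3)\in\mathbb{P}^2$, the Diophantine equation $$\lambda_1\tilde{\mathcal{J}}_1+\lambda_2\tilde{\mathcal{J}}_2+\lambda_3\tilde{\mathcal{J}}_3=\lambda_1(3\beta+2)+\lambda_2(4\beta+9)+4\lambda_3(\beta+2)$$ has infinitely many integer solutions $(w,x,y,z)$. *)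

theory Defs
  imports Complex_Main
begin

text \<open>Division is field division; the statement only uses points with w x y z nonzero.\<close>

definition J1 :: "int \<Rightarrow> int \<Rightarrow> int \<Rightarrow> int \<Rightarrow> int \<Rightarrow> complex" where
  "J1 \<beta> w x y z =
     of_int ((w^2 + z^2) * x * y + \<beta> * (w*x + w*z + y*z)) / of_int (w*x*y*z)"

definition J2 :: "int \<Rightarrow> int \<Rightarrow> int \<Rightarrow> int \<Rightarrow> int \<Rightarrow> complex" where
  "J2 \<beta> w x y z =
     of_int (w^2 * z^2 + x*z*(w^2 + x^2 + y^2 + x*z) + w*y*(x^2 + y^2 + z^2 + w*y)
             + \<beta> * (x^2 + y^2 + x*z + w*y)) / of_int (w*x*y*z)"

definition J3 :: "int \<Rightarrow> int \<Rightarrow> int \<Rightarrow> int \<Rightarrow> int \<Rightarrow> complex" where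
  "J3 \<beta> w x y z =
     of_int ((w + y) * (x + z) * (x*z + y*w + \<beta>)) / of_int (w*x*y*z)"

end

theory Submission
  imports Defs
begin

text \<open>The map \<open>(w, x, y, z) \<mapsto> (x, y, z, (x z + \<beta>) / w)\<close> preserves each of J1, J2, J3
  separately. Its orbit through \<open>(1, 1, 1, 1)\<close>, where the J's take the values on the right-hand
  side, is a window of width four sliding along a sequence with \<open>s(n+4) s(n) = s(n+1) s(n+3) + \<beta>\<close>.
  This sequence also satisfies the linear recurrence \<open>s(n+6) = (3\<beta> + 2) s(n+3) - s(n)\<close>, so it is
  integral, and for \<open>\<beta> \<notin> {0, -1}\<close> we have \<open>|3\<beta> + 2| \<ge> 2\<close>, so its terms grow in absolute value.
  Hence the orbit consists of infinitely many integer points with nonzero coordinates.\<close>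

lemma of_int_divide_eq_divide:
  fixes a b c d :: int
  assumes "b \<noteq> 0" "d \<noteq> 0" "a * d = c * b"
  shows "(of_int a / of_int b :: 'a :: field_char_0) = of_int c / of_int d"
proof -
  have "(of_int a :: 'a) * of_int d = of_int c * of_int b"
    by (metis assms(3) of_int_mult)
  then show ?thesis using assms(1,2) by (simp add: frac_eq_eq)
qed

lemma J1_mutation:
  assumes "w * x * y * z * v \<noteq> 0" "v * w = x * z + \<beta>"
  shows "J1 \<beta> x y z v = J1 \<beta> w x y z"
  unfolding J1_def using assms
  by (intro of_int_divide_eq_divide) (simp_all, algebra)

lemma J2_mutation:
  assumes "w * x * y * z * v \<noteq> 0" "v * w = x * z + \<beta>"
  shows "J2 \<beta> x y z v = J2 \<beta> w x y z"
  unfolding J2_def using assms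
  by (intro of_int_divide_eq_divide) (simp_all, algebra)

lemma J3_mutation:
  assumes "w * x * y * z * v \<noteq> 0" "v * w = x * z + \<beta>"
  shows "J3 \<beta> x y z v = J3 \<beta> w x y z"
  unfolding J3_def using assms
  by (intro of_int_divide_eq_divide) (simp_all, algebra)

lemma periodic_const:
  fixes f :: "nat \<Rightarrow> 'a"
  assumes "0 < p" and "\<And>n. f (n + p) = f n" and "\<And>n. n < p \<Longrightarrow> f n = c"
  shows "f n = c"
proof (induction n rule: less_induct)
  case (less n)
  show ?case
  proof (cases "n < p")
    case False
    then have "f n = f (n - p)" using assms(2)[of "n - p"] by simp
    also have "\<dots> = c" using less.IH[of "n - p"] \<open>0 < p\<close> False by simp
    finally show ?thesis .
  qed (rule assms(3))
qed

lemma mutation_defect_periodic: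
  fixes s :: "nat \<Rightarrow> 'a :: comm_ring"
  assumes "\<And>n. s (n + 6) = K * s (n + 3) - s n"
  shows "s (n + 7) * s (n + 3) - s (n + 4) * s (n + 6) = s (n + 4) * s n - s (n + 1) * s (n + 3)"
proof -
  have "s (n + 7) = K * s (n + 4) - s (n + 1)" using assms[of "n + 1"] by (simp add: ac_simps)
  then show ?thesis unfolding assms[of n] by (simp only:) (simp add: algebra_simps)
qed

lemma abs_less_shift_of_recurrence:
  fixes s :: "nat \<Rightarrow> 'a :: linordered_idom"
  assumes "0 < p" and rec: "\<And>n. s (n + 2 * p) = K * s (n + p) - s n" and "2 \<le> \<bar>K\<bar>"
    and base: "\<And>n. n < p \<Longrightarrow> \<bar>s n\<bar> < \<bar>s (n + p)\<bar>"
  shows "\<bar>s n\<bar> < \<bar>s (n + p)\<bar>"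
proof (induction n rule: less_induct)
  case (less n)
  show ?case
  proof (cases "n < p")
    case False
    define m where "m = n - p"
    have n: "n = m + p" using False by (simp add: m_def)
    have IH: "\<bar>s m\<bar> < \<bar>s n\<bar>" using less[of m] \<open>0 < p\<close> n by simp
    have "2 * \<bar>s n\<bar> \<le> \<bar>K * s n\<bar>" using \<open>2 \<le> \<bar>K\<bar>\<close> by (simp add: abs_mult mult_right_mono)
    moreover have "s (n + p) = K * s n - s m" using rec[of m] by (simp add: n mult_2 add.assoc)
    moreover have "\<bar>K * s n\<bar> - \<bar>s m\<bar> \<le> \<bar>K * s n - s m\<bar>" by (rule abs_triangle_ineq2)
    ultimately show ?thesis using IH by linarith
  qed (rule base)
qed

fun mutation_seq :: "int \<Rightarrow> nat \<Rightarrow> int" where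
  "mutation_seq \<beta> 0 = 1"
| "mutation_seq \<beta> (Suc 0) = 1"
| "mutation_seq \<beta> (Suc (Suc 0)) = 1"
| "mutation_seq \<beta> (Suc (Suc (Suc 0))) = 1"
| "mutation_seq \<beta> (Suc (Suc (Suc (Suc 0)))) = 1 + \<beta>"
| "mutation_seq \<beta> (Suc (Suc (Suc (Suc (Suc 0))))) = 1 + 2 * \<beta>"
| "mutation_seq \<beta> (Suc (Suc (Suc (Suc (Suc (Suc n)))))) =
     (3 * \<beta> + 2) * mutation_seq \<beta> (n + 3) - mutation_seq \<beta> n"

lemma mutation_seq_rec:
  "mutation_seq \<beta> (n + 6) = (3 * \<beta> + 2) * mutation_seq \<beta> (n + 3) - mutation_seq \<beta> n"
  by (simp add: numeral_eq_Suc)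

lemma mutation_seq_mutation:
  "mutation_seq \<beta> (n + 4) * mutation_seq \<beta> n
     = mutation_seq \<beta> (n + 1) * mutation_seq \<beta> (n + 3) + \<beta>"
proof -
  let ?s = "mutation_seq \<beta>"
  have "?s (n + 4) * ?s n - ?s (n + 1) * ?s (n + 3) = \<beta>"
  proof (rule periodic_const[where f = "\<lambda>n. ?s (n + 4) * ?s n - ?s (n + 1) * ?s (n + 3)" and p = 3])
    fix m
    show "?s (m + 3 + 4) * ?s (m + 3) - ?s (m + 3 + 1) * ?s (m + 3 + 3)
        = ?s (m + 4) * ?s m - ?s (m + 1) * ?s (m + 3)"
      using mutation_defect_periodic[of ?s, OF mutation_seq_rec] by (simp add: ac_simps)
  next
    fix m :: nat assume "m < 3"
    then consider "m = 0" | "m = 1" | "m = 2" by linarith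
    then show "?s (m + 4) * ?s m - ?s (m + 1) * ?s (m + 3) = \<beta>"
      by cases (simp_all add: numeral_eq_Suc algebra_simps)
  qed simp
  then show ?thesis by simp
qed

text \<open>Growth only starts at index 2: for \<open>\<beta> = -2\<close> one has \<open>s(4) = -1\<close>, as large as \<open>s(1)\<close>.\<close>

lemma mutation_seq_abs_less:
  assumes "\<beta> \<noteq> 0" "\<beta> \<noteq> -1"
  shows "\<bar>mutation_seq \<beta> (n + 2)\<bar> < \<bar>mutation_seq \<beta> (n + 5)\<bar>"
proof -
  let ?t = "\<lambda>n. mutation_seq \<beta> (n + 2)"
  have "\<bar>?t n\<bar> < \<bar>?t (n + 3)\<bar>"
  proof (rule abs_less_shift_of_recurrence[where K = "3 * \<beta> + 2"])
    show "?t (m + 2 * 3) = (3 * \<beta> + 2) * ?t (m + 3) - ?t m" for m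
      using mutation_seq_rec[of \<beta> "m + 2"] by (simp add: ac_simps)
    show "2 \<le> \<bar>3 * \<beta> + 2\<bar>" using assms by linarith
  next
    fix m :: nat assume "m < 3"
    then consider "m = 0" | "m = 1" | "m = 2" by linarith
    then show "\<bar>?t m\<bar> < \<bar>?t (m + 3)\<bar>"
    proof cases
      case 3
      define p where "p = (3 * \<beta> + 2) * (1 + \<beta>)"
      have "4 * \<bar>1 + \<beta>\<bar> \<le> \<bar>p\<bar>"
        unfolding p_def abs_mult using assms by (intro mult_right_mono) auto
      moreover have "1 \<le> \<bar>1 + \<beta>\<bar>" using assms by linarith
      moreover have "\<bar>p\<bar> - \<bar>1\<bar> \<le> \<bar>p - 1\<bar>" by (rule abs_triangle_ineq2)
      ultimately have "\<bar>1 + \<beta>\<bar> < \<bar>p - 1\<bar>" by simp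
      then show ?thesis by (simp add: 3 p_def numeral_eq_Suc)
    qed (use assms in \<open>simp_all add: numeral_eq_Suc\<close>)
  qed simp
  then show ?thesis by (simp add: ac_simps)
qed

lemma mutation_seq_nonzero:
  assumes "\<beta> \<noteq> 0" "\<beta> \<noteq> -1"
  shows "mutation_seq \<beta> n \<noteq> 0"
proof (cases "n < 5")
  case True
  then consider "n = 0" | "n = 1" | "n = 2" | "n = 3" | "n = 4" by linarith
  then show ?thesis by cases (use assms in \<open>simp_all add: numeral_eq_Suc\<close>)
next
  case False
  then have "n = (n - 5) + 5" by simp
  then show ?thesis
    using mutation_seq_abs_less[OF assms, of "n - 5"] by (metis abs_ge_zero abs_zero not_less)
qed

lemma mutation_seq_abs_strict_mono:
  assumes "\<beta> \<noteq> 0" "\<beta> \<noteq> -1"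
  shows "strict_mono (\<lambda>m. \<bar>mutation_seq \<beta> (3 * m + 2)\<bar>)"
  unfolding strict_mono_Suc_iff
proof
  show "\<bar>mutation_seq \<beta> (3 * m + 2)\<bar> < \<bar>mutation_seq \<beta> (3 * Suc m + 2)\<bar>" for m :: nat
    using mutation_seq_abs_less[OF assms, of "3 * m"] by (simp add: numeral_eq_Suc)
qed

lemma invariant_along_mutation_seq:
  fixes J :: "int \<Rightarrow> int \<Rightarrow> int \<Rightarrow> int \<Rightarrow> 'a"
  assumes "\<beta> \<noteq> 0" "\<beta> \<noteq> -1"
    and J: "\<And>w x y z v. w * x * y * z * v \<noteq> 0 \<Longrightarrow> v * w = x * z + \<beta> \<Longrightarrow> J x y z v = J w x y z"
  shows "J (mutation_seq \<beta> n) (mutation_seq \<beta> (n + 1))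
           (mutation_seq \<beta> (n + 2)) (mutation_seq \<beta> (n + 3)) = J 1 1 1 1"
proof (induction n)
  case 0
  show ?case by (simp add: numeral_eq_Suc)
next
  case (Suc n)
  let ?s = "mutation_seq \<beta>"
  have "J (?s (n + 1)) (?s (n + 2)) (?s (n + 3)) (?s (n + 4))
      = J (?s n) (?s (n + 1)) (?s (n + 2)) (?s (n + 3))"
    by (rule J) (simp_all add: mutation_seq_nonzero[OF assms(1,2)] mutation_seq_mutation)
  with Suc.IH show ?case by (simp add: numeral_eq_Suc)
qed

definition mutation_orbit :: "int \<Rightarrow> nat \<Rightarrow> int \<times> int \<times> int \<times> int" where
  "mutation_orbit \<beta> n =
     (mutation_seq \<beta> n, mutation_seq \<beta> (n + 1), mutation_seq \<beta> (n + 2), mutation_seq \<beta> (n + 3))"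

lemma inj_mutation_orbit:
  assumes "\<beta> \<noteq> 0" "\<beta> \<noteq> -1"
  shows "inj (\<lambda>m. mutation_orbit \<beta> (3 * m + 2))"
proof (rule injI)
  fix m n assume "mutation_orbit \<beta> (3 * m + 2) = mutation_orbit \<beta> (3 * n + 2)"
  then have "\<bar>mutation_seq \<beta> (3 * m + 2)\<bar> = \<bar>mutation_seq \<beta> (3 * n + 2)\<bar>"
    by (simp add: mutation_orbit_def)
  then show "m = n" using strict_mono_eq[OF mutation_seq_abs_strict_mono[OF assms]] by blast
qed

theorem corollary3p10:
  fixes \<beta> :: int and l1 l2 l3 :: complex
  assumes "\<beta> \<noteq> 0" and "\<beta> \<noteq> -1"
    and "(l1, l2, l3) \<noteq> (0, 0, 0)"
  shows "infinite {(w::int, x::int, y::int, z::int).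
            w * x * y * z \<noteq> 0 \<and>
            l1 * J1 \<beta> w x y z + l2 * J2 \<beta> w x y z + l3 * J3 \<beta> w x y z
              = l1 * of_int (3*\<beta> + 2) + l2 * of_int (4*\<beta> + 9) + 4 * l3 * of_int (\<beta> + 2)}"
  (is "infinite ?S")
proof -
  \<comment> \<open>Each J is constant along the orbit by itself.\<close>
  have start: "J1 \<beta> 1 1 1 1 = of_int (3 * \<beta> + 2)" "J2 \<beta> 1 1 1 1 = of_int (4 * \<beta> + 9)"
    "J3 \<beta> 1 1 1 1 = 4 * of_int (\<beta> + 2)"
    by (simp_all add: J1_def J2_def J3_def)
  have orbit_in: "mutation_orbit \<beta> n \<in> ?S" for n
    using start invariant_along_mutation_seq[where J = "J1 \<beta>", OF assms(1,2) J1_mutation]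
      invariant_along_mutation_seq[where J = "J2 \<beta>", OF assms(1,2) J2_mutation]
      invariant_along_mutation_seq[where J = "J3 \<beta>", OF assms(1,2) J3_mutation]
      mutation_seq_nonzero[OF assms(1,2)]
    by (simp add: mutation_orbit_def)
  then have "range (\<lambda>m. mutation_orbit \<beta> (3 * m + 2)) \<subseteq> ?S"
    by (intro image_subsetI orbit_in)
  then show ?thesis
    using inj_mutation_orbit[OF assms(1,2)] by (meson finite_imageD finite_subset infinite_UNIV_nat)
qed

end
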